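(* Let $\mathcal{V}$ be an inner product space, $\mathcal{L}$ a linear operator on $\mathcal{V}$, and $\mathcal{U}\subset\mathcal{V}$ the subspace spanned by an orthonormal system $\{\mathbf{v}_1,\dots,\mathbf{v}_K\}$. Suppose that $(1-\epsilon)\|\mathbf{v}_i\|^2\le\|\mathcal{L}\mathbf{v}_i\|^2\le(1+\epsilon)\|\mathbf{v}_i\|^2$ for all $1\le i\le K$, and $(1-\epsilon)\|\mathbf{v}_i\pm\mathbf{v}_j\|^2\le\|\mathcal{L}(\mathbf{v}_i\pm\mathbf{v}_j)\|^2\le(1+\epsilon)\|\mathbf{v}_i\pm\mathbf{v}_j\|^2$ for all $1\le i,j\le K$. Then $$(1-K\epsilon)\|\mathbf{w}\|^2\le\|\mathcal{L}\mathbf{w}\|^2\le(1+K\epsilon)\|\mathbf{w}\|^2\quad\text{for all }\mathbf{w}\in\mathcal{U}.$$ *)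

theory Defs
  imports "HOL-Analysis.Analysis"
begin

end

theory Submission
  imports Defs
begin

(* Write w = \<Sum>\<^sub>i c\<^sub>i v\<^sub>i. Then
     \<parallel>L w\<parallel>\<^sup>2 - \<parallel>w\<parallel>\<^sup>2 = \<Sum>\<^sub>i\<^sub>j c\<^sub>i c\<^sub>j B\<^sub>i\<^sub>j,   B\<^sub>i\<^sub>j = \<langle>L v\<^sub>i, L v\<^sub>j\<rangle> - \<langle>v\<^sub>i, v\<^sub>j\<rangle>.
   The hypotheses give |B\<^sub>i\<^sub>j| \<le> \<epsilon>: on the diagonal directly, off the diagonal by
   polarization, since v\<^sub>i + v\<^sub>j and v\<^sub>i - v\<^sub>j both have squared norm 2.
   Bounding |c\<^sub>i c\<^sub>j| \<le> (c\<^sub>i\<^sup>2 + c\<^sub>j\<^sup>2)/2 then gives |\<parallel>L w\<parallel>\<^sup>2 - \<parallel>w\<parallel>\<^sup>2| \<le> K \<epsilon> \<parallel>w\<parallel>\<^sup>2. *)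

lemma span_image_finite_sumE:
  fixes v :: "'i \<Rightarrow> 'a::real_vector"
  assumes "finite I" and "x \<in> span (v ` I)"
  obtains c where "x = (\<Sum>i\<in>I. c i *\<^sub>R v i)"
proof -
  from assms(2) have "\<exists>c. x = (\<Sum>i\<in>I. c i *\<^sub>R v i)"
  proof (induction rule: span_induct_alt)
    case base
    show ?case by (intro exI[of _ "\<lambda>_. 0"]) simp
  next
    case (step a y z)
    then obtain k c where k: "k \<in> I" "y = v k" and z: "z = (\<Sum>i\<in>I. c i *\<^sub>R v i)"
      by blast
    have "a *\<^sub>R y = (\<Sum>i\<in>I. (if i = k then a else 0) *\<^sub>R v i)"
      using k \<open>finite I\<close>
      by (simp add: if_distrib[where f = "\<lambda>r. r *\<^sub>R _"] sum.delta' cong: if_cong)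
    then have "a *\<^sub>R y + z = (\<Sum>i\<in>I. (c i + (if i = k then a else 0)) *\<^sub>R v i)"
      by (simp add: z scaleR_add_left sum.distrib)
    then show ?case by auto
  qed
  then show thesis using that by blast
qed

lemma power2_norm_sum_scaleR:
  fixes x :: "'i \<Rightarrow> 'a::real_inner"
  shows "(norm (\<Sum>i\<in>I. c i *\<^sub>R x i))\<^sup>2 = (\<Sum>i\<in>I. \<Sum>j\<in>I. c i * c j * (x i \<bullet> x j))"
  by (simp add: power2_norm_eq_inner inner_sum_left inner_sum_right sum_distrib_left
      algebra_simps inner_commute)

lemma power2_norm_sum_orthonormal:
  fixes x :: "'i \<Rightarrow> 'a::real_inner"
  assumes "finite I" and "\<forall>i\<in>I. \<forall>j\<in>I. x i \<bullet> x j = (if i = j then 1 else 0)"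
  shows "(norm (\<Sum>i\<in>I. c i *\<^sub>R x i))\<^sup>2 = (\<Sum>i\<in>I. (c i)\<^sup>2)"
proof -
  have "(\<Sum>i\<in>I. \<Sum>j\<in>I. c i * c j * (x i \<bullet> x j))
      = (\<Sum>i\<in>I. \<Sum>j\<in>I. if i = j then c i * c j else 0)"
    using assms(2) by (intro sum.cong) auto
  then show ?thesis
    using assms(1) by (simp add: power2_norm_sum_scaleR flip: power2_eq_square)
qed

lemma abs_inner_image_orthogonal_le:
  fixes L :: "'a::real_inner \<Rightarrow> 'b::real_inner"
  assumes "linear L" and "x \<bullet> y = 0"
    and plus: "(1 - \<epsilon>) * (norm (x + y))\<^sup>2 \<le> (norm (L (x + y)))\<^sup>2"
      "(norm (L (x + y)))\<^sup>2 \<le> (1 + \<epsilon>) * (norm (x + y))\<^sup>2"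
    and minus: "(1 - \<epsilon>) * (norm (x - y))\<^sup>2 \<le> (norm (L (x - y)))\<^sup>2"
      "(norm (L (x - y)))\<^sup>2 \<le> (1 + \<epsilon>) * (norm (x - y))\<^sup>2"
  shows "\<bar>L x \<bullet> L y\<bar> \<le> \<epsilon> * ((norm x)\<^sup>2 + (norm y)\<^sup>2) / 2"
proof -
  have pythagoras: "(norm (x + y))\<^sup>2 = (norm x)\<^sup>2 + (norm y)\<^sup>2"
    "(norm (x - y))\<^sup>2 = (norm x)\<^sup>2 + (norm y)\<^sup>2"
    using \<open>x \<bullet> y = 0\<close>
    by (simp_all add: power2_norm_eq_inner inner_add_left inner_add_right inner_diff_left
        inner_diff_right inner_commute)
  have "4 * (L x \<bullet> L y) = (norm (L (x + y)))\<^sup>2 - (norm (L (x - y)))\<^sup>2"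
    using dot_norm[of "L x" "L y"] dot_norm_neg[of "L x" "L y"] \<open>linear L\<close>
    by (simp add: linear_add linear_diff)
  then show ?thesis
    using plus minus unfolding pythagoras by (simp add: abs_le_iff algebra_simps)
qed

lemma abs_quadratic_form_le_card:
  fixes c :: "'i \<Rightarrow> real" and B :: "'i \<Rightarrow> 'i \<Rightarrow> real"
  assumes "finite I" and B: "\<And>i j. i \<in> I \<Longrightarrow> j \<in> I \<Longrightarrow> \<bar>B i j\<bar> \<le> e"
  shows "\<bar>\<Sum>i\<in>I. \<Sum>j\<in>I. c i * c j * B i j\<bar> \<le> e * real (card I) * (\<Sum>i\<in>I. (c i)\<^sup>2)"
proof -
  have term_le: "\<bar>c i * c j * B i j\<bar> \<le> e * ((c i)\<^sup>2 + (c j)\<^sup>2) / 2"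
    if "i \<in> I" "j \<in> I" for i j
  proof -
    have "\<bar>c i * c j\<bar> \<le> ((c i)\<^sup>2 + (c j)\<^sup>2) / 2"
      using sum_squares_bound[of "\<bar>c i\<bar>" "\<bar>c j\<bar>"] by (simp add: abs_mult)
    moreover have "\<bar>B i j\<bar> \<le> e" using B that .
    ultimately have "\<bar>c i * c j\<bar> * \<bar>B i j\<bar> \<le> ((c i)\<^sup>2 + (c j)\<^sup>2) / 2 * e"
      by (intro mult_mono) auto
    then show ?thesis by (simp add: abs_mult algebra_simps)
  qed
  have "\<bar>\<Sum>i\<in>I. \<Sum>j\<in>I. c i * c j * B i j\<bar> \<le> (\<Sum>i\<in>I. \<Sum>j\<in>I. \<bar>c i * c j * B i j\<bar>)"
    by (rule order_trans[OF sum_abs]) (intro sum_mono sum_abs)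
  also have "\<dots> \<le> (\<Sum>i\<in>I. \<Sum>j\<in>I. e * ((c i)\<^sup>2 + (c j)\<^sup>2) / 2)"
    by (intro sum_mono term_le)
  also have "\<dots> = e / 2 * (\<Sum>i\<in>I. \<Sum>j\<in>I. (c i)\<^sup>2 + (c j)\<^sup>2)"
    by (simp add: sum_distrib_left)
  also have "(\<Sum>i\<in>I. \<Sum>j\<in>I. (c i)\<^sup>2 + (c j)\<^sup>2) = 2 * real (card I) * (\<Sum>i\<in>I. (c i)\<^sup>2)"
    by (simp add: sum.distrib sum_distrib_left sum_distrib_right algebra_simps)
  finally show ?thesis by simp
qed

theorem lemma3:
  fixes L :: "'a::real_inner \<Rightarrow> 'a" and v :: "nat \<Rightarrow> 'a"
    and K :: nat and \<epsilon> :: real and w :: 'a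
  assumes lin: "linear L"
    and orthonormal: "\<forall>i\<in>{1..K}. \<forall>j\<in>{1..K}. v i \<bullet> v j = (if i = j then 1 else 0)"
    and single: "\<forall>i\<in>{1..K}. (1 - \<epsilon>) * (norm (v i))\<^sup>2 \<le> (norm (L (v i)))\<^sup>2
                          \<and> (norm (L (v i)))\<^sup>2 \<le> (1 + \<epsilon>) * (norm (v i))\<^sup>2"
    and plus: "\<forall>i\<in>{1..K}. \<forall>j\<in>{1..K}.
                 (1 - \<epsilon>) * (norm (v i + v j))\<^sup>2 \<le> (norm (L (v i + v j)))\<^sup>2
               \<and> (norm (L (v i + v j)))\<^sup>2 \<le> (1 + \<epsilon>) * (norm (v i + v j))\<^sup>2"
    and minus: "\<forall>i\<in>{1..K}. \<forall>j\<in>{1..K}.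
                 (1 - \<epsilon>) * (norm (v i - v j))\<^sup>2 \<le> (norm (L (v i - v j)))\<^sup>2
               \<and> (norm (L (v i - v j)))\<^sup>2 \<le> (1 + \<epsilon>) * (norm (v i - v j))\<^sup>2"
    and w: "w \<in> span (v ` {1..K})"
  shows "(1 - real K * \<epsilon>) * (norm w)\<^sup>2 \<le> (norm (L w))\<^sup>2
       \<and> (norm (L w))\<^sup>2 \<le> (1 + real K * \<epsilon>) * (norm w)\<^sup>2"
proof -
  let ?I = "{1..K}"
  have unit: "v i \<bullet> v i = 1" if "i \<in> ?I" for i
    using orthonormal that by auto
  have orth: "v i \<bullet> v j = 0" if "i \<in> ?I" "j \<in> ?I" "i \<noteq> j" for i j
    using orthonormal that by auto
  obtain c where w_eq: "w = (\<Sum>i\<in>?I. c i *\<^sub>R v i)"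
    using span_image_finite_sumE[OF _ w] by blast
  have Lw_eq: "L w = (\<Sum>i\<in>?I. c i *\<^sub>R L (v i))"
    using lin by (simp add: w_eq linear_sum linear_scale)
  define B where "B i j = L (v i) \<bullet> L (v j) - v i \<bullet> v j" for i j
  have B_le: "\<bar>B i j\<bar> \<le> \<epsilon>" if ij: "i \<in> ?I" "j \<in> ?I" for i j
  proof (cases "i = j")
    case True
    then show ?thesis
      using single[rule_format, OF ij(1)] unit[OF ij(1)]
      by (simp add: B_def power2_norm_eq_inner abs_le_iff)
  next
    case False
    have "\<bar>L (v i) \<bullet> L (v j)\<bar> \<le> \<epsilon> * ((norm (v i))\<^sup>2 + (norm (v j))\<^sup>2) / 2"
      using plus minus ij by (intro abs_inner_image_orthogonal_le lin orth False) auto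
    then show ?thesis
      using ij False unit orth by (simp add: B_def power2_norm_eq_inner)
  qed
  have "(norm (L w))\<^sup>2 - (norm w)\<^sup>2 = (\<Sum>i\<in>?I. \<Sum>j\<in>?I. c i * c j * B i j)"
    unfolding Lw_eq unfolding w_eq power2_norm_sum_scaleR B_def
    by (simp add: sum_subtractf[symmetric] right_diff_distrib)
  moreover have "(norm w)\<^sup>2 = (\<Sum>i\<in>?I. (c i)\<^sup>2)"
    unfolding w_eq using orthonormal by (simp add: power2_norm_sum_orthonormal)
  ultimately have "\<bar>(norm (L w))\<^sup>2 - (norm w)\<^sup>2\<bar> \<le> \<epsilon> * real K * (norm w)\<^sup>2"
    using abs_quadratic_form_le_card[of ?I B \<epsilon> c] B_le by simp
  then show ?thesis by (simp add: algebra_simps abs_le_iff)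
qed

end
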